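(* Let $G$ be a $2$-connected cubic graph endowed with a perfect-matching $4$-cover $\mathcal{P}=\{P_1,P_2,P_3,P_4\}$. (i) If $R$ is a $2$-edge-cut of $G$, then either both edges of $R$ are simply covered or both are doubly covered; moreover, they belong to the same members of $\mathcal{P}$ (either one or two). (ii) If $R$ is a $3$-edge-cut of $G$, then either exactly one or all three edges of $R$ are doubly covered; in the latter case there is $P_j\in\mathcal{P}$ with $R\subseteq P_j$.
   Context: Graphs are finite; loops and multiple edges are allowed. A perfect-matching $4$-cover of a cubic graph $G$ is a set of four perfect matchings $P_1,\dots,P_4$ of $G$ whose union is $E(G)$. An edge is simply covered if it belongs to exactly one $P_i$ and doubly covered if it belongs to exactly two. (In such a cover every vertex is incident with exactly one doubly covered edge and no edge is covered three or more times.) *)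

theory Defs
  imports Main
begin

text \<open>Finite multigraphs (loops and parallel edges allowed): a vertex set V, an edge
set E and an incidence map ends assigning to every edge its set of end-vertices
(a singleton for a loop, a two-element set otherwise).\<close>

definition multigraph :: "'v set \<Rightarrow> 'e set \<Rightarrow> ('e \<Rightarrow> 'v set) \<Rightarrow> bool" where
  "multigraph V E ends \<longleftrightarrow> finite V \<and> finite E \<and>
     (\<forall>e\<in>E. ends e \<subseteq> V \<and> 1 \<le> card (ends e) \<and> card (ends e) \<le> 2)"

definition is_loop :: "('e \<Rightarrow> 'v set) \<Rightarrow> 'e \<Rightarrow> bool" where
  "is_loop ends e \<longleftrightarrow> card (ends e) = 1"

text \<open>Degree: loops count twice.\<close>
definition degree :: "'e set \<Rightarrow> ('e \<Rightarrow> 'v set) \<Rightarrow> 'v \<Rightarrow> nat" where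
  "degree E ends v = card {e\<in>E. v \<in> ends e} + card {e\<in>E. ends e = {v}}"

definition cubic :: "'v set \<Rightarrow> 'e set \<Rightarrow> ('e \<Rightarrow> 'v set) \<Rightarrow> bool" where
  "cubic V E ends \<longleftrightarrow> multigraph V E ends \<and> (\<forall>v\<in>V. degree E ends v = 3)"

definition adj_in :: "'v set \<Rightarrow> 'e set \<Rightarrow> ('e \<Rightarrow> 'v set) \<Rightarrow> ('v \<times> 'v) set" where
  "adj_in W E ends = {(u, w). \<exists>e\<in>E. ends e \<subseteq> W \<and> u \<in> ends e \<and> w \<in> ends e}"

definition connected_on :: "'v set \<Rightarrow> 'e set \<Rightarrow> ('e \<Rightarrow> 'v set) \<Rightarrow> bool" where
  "connected_on W E ends \<longleftrightarrow> W \<noteq> {} \<and> (\<forall>u\<in>W. \<forall>w\<in>W. (u, w) \<in> (adj_in W E ends)\<^sup>*)"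

definition two_connected :: "'v set \<Rightarrow> 'e set \<Rightarrow> ('e \<Rightarrow> 'v set) \<Rightarrow> bool" where
  "two_connected V E ends \<longleftrightarrow> card V > 2 \<and> connected_on V E ends \<and>
     (\<forall>v\<in>V. connected_on (V - {v}) E ends)"

definition perfect_matching :: "'v set \<Rightarrow> 'e set \<Rightarrow> ('e \<Rightarrow> 'v set) \<Rightarrow> 'e set \<Rightarrow> bool" where
  "perfect_matching V E ends M \<longleftrightarrow> M \<subseteq> E \<and> (\<forall>e\<in>M. \<not> is_loop ends e) \<and>
     (\<forall>v\<in>V. card {e\<in>M. v \<in> ends e} = 1)"

definition pm_4cover :: "'v set \<Rightarrow> 'e set \<Rightarrow> ('e \<Rightarrow> 'v set) \<Rightarrow> (nat \<Rightarrow> 'e set) \<Rightarrow> bool" where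
  "pm_4cover V E ends P \<longleftrightarrow> inj_on P {0..<4} \<and>
     (\<forall>i<4. perfect_matching V E ends (P i)) \<and> (\<Union>i<4. P i) = E"

definition cover_mult :: "(nat \<Rightarrow> 'e set) \<Rightarrow> 'e \<Rightarrow> nat" where
  "cover_mult P e = card {i. i < 4 \<and> e \<in> P i}"

definition simply_covered :: "(nat \<Rightarrow> 'e set) \<Rightarrow> 'e \<Rightarrow> bool" where
  "simply_covered P e \<longleftrightarrow> cover_mult P e = 1"

definition doubly_covered :: "(nat \<Rightarrow> 'e set) \<Rightarrow> 'e \<Rightarrow> bool" where
  "doubly_covered P e \<longleftrightarrow> cover_mult P e = 2"

definition edge_cut :: "'v set \<Rightarrow> 'e set \<Rightarrow> ('e \<Rightarrow> 'v set) \<Rightarrow> 'v set \<Rightarrow> 'e set" where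
  "edge_cut V E ends X = {e\<in>E. ends e \<inter> X \<noteq> {} \<and> ends e \<inter> (V - X) \<noteq> {}}"

definition is_k_edge_cut :: "'v set \<Rightarrow> 'e set \<Rightarrow> ('e \<Rightarrow> 'v set) \<Rightarrow> nat \<Rightarrow> 'e set \<Rightarrow> bool" where
  "is_k_edge_cut V E ends k R \<longleftrightarrow> (\<exists>X\<subseteq>V. R = edge_cut V E ends X) \<and> card R = k"

end

theory Submission
  imports Defs
begin

(* Everything follows from the parity lemma: if every vertex of X has odd degree in a
   loopless edge set M, then |M \<inter> \<delta>(X)| \<equiv> |X| (mod 2).  Applied to the cubic graph and to
   each perfect matching P_i it shows that every P_i meets an edge cut R in a number of
   edges of the same parity as |R|.  Counting incidences at a vertex shows that every
   edge lies in one or two of the P_i; double counting the pairs (P_i, e) with e \<in> P_i \<inter> R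
   then settles both parts. *)

lemma card_ends_inter:
  assumes "card (ends e) = 2" "ends e \<subseteq> V"
  shows "card (ends e \<inter> X) =
    2 * of_bool (ends e \<subseteq> X) + of_bool (ends e \<inter> X \<noteq> {} \<and> ends e \<inter> (V - X) \<noteq> {})"
proof -
  obtain a b where "ends e = {a, b}" "a \<noteq> b"
    using assms(1) card_2_iff by metis
  then show ?thesis
    using assms(2) by (cases "a \<in> X"; cases "b \<in> X") auto
qed

lemma regular_degree_sum_edge_cut:
  assumes "finite M" "M \<subseteq> E" "finite X"
    and loopless: "\<forall>e\<in>M. card (ends e) = 2 \<and> ends e \<subseteq> V"
    and regular: "\<forall>v\<in>X. card {e\<in>M. v \<in> ends e} = k"
  shows "k * card X = 2 * card {e\<in>M. ends e \<subseteq> X} + card (M \<inter> edge_cut V E ends X)"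
proof -
  have "k * card X = (\<Sum>v\<in>X. card {e\<in>M. v \<in> ends e})"
    using regular by simp
  also have "\<dots> = (\<Sum>e\<in>M. card (ends e \<inter> X))"
    by (rule sum_multicount_gen) (use assms(1,3) in \<open>auto intro: arg_cong[where f = card]\<close>)
  also have "\<dots> = (\<Sum>e\<in>M. 2 * of_bool (ends e \<subseteq> X)
      + of_bool (ends e \<inter> X \<noteq> {} \<and> ends e \<inter> (V - X) \<noteq> {}))"
    using loopless by (intro sum.cong) (simp_all add: card_ends_inter)
  also have "\<dots> = 2 * card {e\<in>M. ends e \<subseteq> X} + card (M \<inter> edge_cut V E ends X)"
  proof -
    have "M \<inter> {e. ends e \<subseteq> X} = {e\<in>M. ends e \<subseteq> X}"
      "M \<inter> {e. ends e \<inter> X \<noteq> {} \<and> ends e \<inter> (V - X) \<noteq> {}} = M \<inter> edge_cut V E ends X"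
      using \<open>M \<subseteq> E\<close> unfolding edge_cut_def by auto
    then show ?thesis
      using \<open>finite M\<close> by (simp add: sum.distrib flip: sum_distrib_left)
  qed
  finally show ?thesis .
qed

lemma odd_regular_edge_cut_parity:
  assumes "finite M" "M \<subseteq> E" "finite X"
    and "\<forall>e\<in>M. card (ends e) = 2 \<and> ends e \<subseteq> V"
    and "\<forall>v\<in>X. card {e\<in>M. v \<in> ends e} = k" "odd k"
  shows "odd (card (M \<inter> edge_cut V E ends X)) \<longleftrightarrow> odd (card X)"
proof -
  have "even (k * card X) \<longleftrightarrow> even (card (M \<inter> edge_cut V E ends X))"
    unfolding regular_degree_sum_edge_cut[OF assms(1-5)] by simp
  with \<open>odd k\<close> show ?thesis
    by simp
qed

lemma sum_card_inter_eq_sum_cover_mult: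
  assumes "finite S"
  shows "(\<Sum>i<4. card (P i \<inter> S)) = (\<Sum>e\<in>S. cover_mult P e)"
proof -
  have "(\<Sum>i<4. card (P i \<inter> S)) = (\<Sum>i<4. card {e\<in>S. e \<in> P i})"
    by (auto intro!: sum.cong arg_cong[where f = card])
  also have "\<dots> = (\<Sum>e\<in>S. cover_mult P e)"
    by (rule sum_multicount_gen)
      (use assms in \<open>auto simp: cover_mult_def intro!: arg_cong[where f = card]\<close>)
  finally show ?thesis .
qed

locale cubic_pm_4cover =
  fixes V :: "'v set" and E :: "'e set" and ends :: "'e \<Rightarrow> 'v set"
    and P :: "nat \<Rightarrow> 'e set"
  assumes cubic: "cubic V E ends" and cover: "pm_4cover V E ends P"
begin

lemma finite_E: "finite E"
  using cubic unfolding cubic_def multigraph_def by blast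

lemma finite_V: "finite V"
  using cubic unfolding cubic_def multigraph_def by blast

lemma matching: "i < 4 \<Longrightarrow> perfect_matching V E ends (P i)"
  using cover unfolding pm_4cover_def by blast

lemma matching_subset: "i < 4 \<Longrightarrow> P i \<subseteq> E"
  using matching unfolding perfect_matching_def by blast

lemma finite_matching: "i < 4 \<Longrightarrow> finite (P i)"
  using matching_subset finite_E by (rule finite_subset)

lemma matching_incident: "i < 4 \<Longrightarrow> v \<in> V \<Longrightarrow> card {e\<in>P i. v \<in> ends e} = 1"
  using matching unfolding perfect_matching_def by blast

lemma covered: "e \<in> E \<Longrightarrow> \<exists>i<4. e \<in> P i"
  using cover unfolding pm_4cover_def by blast

lemma card_ends: "e \<in> E \<Longrightarrow> card (ends e) = 2"
proof -
  assume "e \<in> E"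
  then obtain i where "i < 4" "e \<in> P i"
    using covered by blast
  then have "\<not> is_loop ends e"
    using matching unfolding perfect_matching_def by blast
  with \<open>e \<in> E\<close> cubic show ?thesis
    unfolding cubic_def multigraph_def is_loop_def by fastforce
qed

lemma ends_subset: "e \<in> E \<Longrightarrow> ends e \<subseteq> V"
  using cubic unfolding cubic_def multigraph_def by blast

lemma cubic_incident: "v \<in> V \<Longrightarrow> card {e\<in>E. v \<in> ends e} = 3"
proof -
  assume "v \<in> V"
  have "{e\<in>E. ends e = {v}} = {}"
    using card_ends by fastforce
  with \<open>v \<in> V\<close> cubic show ?thesis
    unfolding cubic_def degree_def by (metis add_0_right card.empty)
qed

lemma cover_mult_pos: "e \<in> E \<Longrightarrow> 0 < cover_mult P e"
  using covered unfolding cover_mult_def by (auto simp: card_gt_0_iff)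

(* The four matchings contribute exactly four incidences at an end a of e, shared by the
   three edges at a, each of which is covered at least once. *)
lemma cover_mult_le_2: "e \<in> E \<Longrightarrow> cover_mult P e \<le> 2"
proof -
  assume "e \<in> E"
  have "ends e \<noteq> {}" "ends e \<subseteq> V"
    using card_ends[OF \<open>e \<in> E\<close>] ends_subset[OF \<open>e \<in> E\<close>] by auto
  then obtain a where a: "a \<in> ends e" "a \<in> V"
    by blast
  define S where "S = {f\<in>E. a \<in> ends f}"
  have "finite S" "card S = 3" "e \<in> S"
    using finite_E cubic_incident \<open>e \<in> E\<close> a unfolding S_def by auto
  have "P i \<inter> S = {f\<in>P i. a \<in> ends f}" if "i < 4" for i
    using matching_subset[OF that] unfolding S_def by blast
  then have "(\<Sum>f\<in>S. cover_mult P f) = 4"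
    using matching_incident \<open>a \<in> V\<close> sum_card_inter_eq_sum_cover_mult[OF \<open>finite S\<close>, of P]
    by simp
  moreover have "(\<Sum>f\<in>S. cover_mult P f) = cover_mult P e + (\<Sum>f\<in>S - {e}. cover_mult P f)"
    using \<open>finite S\<close> \<open>e \<in> S\<close> by (simp add: sum.remove)
  moreover have "card (S - {e}) \<le> (\<Sum>f\<in>S - {e}. cover_mult P f)"
    using sum_mono[of "S - {e}" "\<lambda>_. 1::nat" "cover_mult P"] cover_mult_pos
    unfolding S_def by fastforce
  ultimately show ?thesis
    using \<open>finite S\<close> \<open>card S = 3\<close> \<open>e \<in> S\<close> by simp
qed

lemma cover_mult_1_or_2: "e \<in> E \<Longrightarrow> cover_mult P e = 1 \<or> cover_mult P e = 2"
  using cover_mult_pos cover_mult_le_2 by fastforce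

lemma edge_cut_parity: "odd (card (edge_cut V E ends X)) \<longleftrightarrow> odd (card X)" if "X \<subseteq> V"
proof -
  have "edge_cut V E ends X = E \<inter> edge_cut V E ends X"
    unfolding edge_cut_def by blast
  moreover have "odd (card (E \<inter> edge_cut V E ends X)) \<longleftrightarrow> odd (card X)"
  proof (rule odd_regular_edge_cut_parity[OF finite_E subset_refl])
    show "finite X"
      using finite_V that by (rule finite_subset[rotated])
    show "\<forall>e\<in>E. card (ends e) = 2 \<and> ends e \<subseteq> V"
      using card_ends ends_subset by blast
    show "\<forall>v\<in>X. card {e\<in>E. v \<in> ends e} = 3"
      using cubic_incident that by blast
  qed simp
  ultimately show ?thesis
    by simp
qed

lemma matching_edge_cut_parity:
  assumes "X \<subseteq> V" "i < 4"
  shows "odd (card (P i \<inter> edge_cut V E ends X)) \<longleftrightarrow> odd (card (edge_cut V E ends X))"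
proof -
  have "odd (card (P i \<inter> edge_cut V E ends X)) \<longleftrightarrow> odd (card X)"
  proof (rule odd_regular_edge_cut_parity[OF finite_matching matching_subset])
    show "finite X"
      using finite_V assms(1) by (rule finite_subset[rotated])
    show "\<forall>e\<in>P i. card (ends e) = 2 \<and> ends e \<subseteq> V"
      using card_ends ends_subset matching_subset[OF \<open>i < 4\<close>] by blast
    show "\<forall>v\<in>X. card {e\<in>P i. v \<in> ends e} = 1"
      using matching_incident assms by blast
  qed (use assms in simp_all)
  with edge_cut_parity[OF \<open>X \<subseteq> V\<close>] show ?thesis
    by simp
qed

lemma edge_cut_subset: "is_k_edge_cut V E ends k R \<Longrightarrow> R \<subseteq> E"
  unfolding is_k_edge_cut_def edge_cut_def by blast

lemma matching_meets_edge_cut: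
  assumes "is_k_edge_cut V E ends k R" "i < 4"
  shows "odd (card (P i \<inter> R)) \<longleftrightarrow> odd k"
  using assms matching_edge_cut_parity unfolding is_k_edge_cut_def by blast

lemma matching_meets_two_edge_cut:
  assumes "is_k_edge_cut V E ends 2 R" "i < 4"
  shows "P i \<inter> R = {} \<or> R \<subseteq> P i"
proof -
  have "card R = 2" "finite R"
    using assms(1) unfolding is_k_edge_cut_def by (auto intro: card_ge_0_finite)
  moreover have "even (card (P i \<inter> R))"
    using matching_meets_edge_cut[OF assms] by simp
  moreover have "card (P i \<inter> R) \<le> card R"
    using \<open>finite R\<close> by (simp add: card_mono)
  ultimately have "card (P i \<inter> R) = 0 \<or> card (P i \<inter> R) = card R"
    by presburger
  then show ?thesis
    using \<open>finite R\<close> card_subset_eq[of R "P i \<inter> R"] by auto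
qed

lemma matching_meets_three_edge_cut:
  assumes "is_k_edge_cut V E ends 3 R" "i < 4"
  shows "card (P i \<inter> R) = 1 \<or> R \<subseteq> P i"
proof -
  have "card R = 3" "finite R"
    using assms(1) unfolding is_k_edge_cut_def by (auto intro: card_ge_0_finite)
  moreover have "odd (card (P i \<inter> R))"
    using matching_meets_edge_cut[OF assms] by simp
  moreover have "card (P i \<inter> R) \<le> card R"
    using \<open>finite R\<close> by (simp add: card_mono)
  ultimately have "card (P i \<inter> R) = 1 \<or> card (P i \<inter> R) = card R"
    by presburger
  then show ?thesis
    using \<open>finite R\<close> card_subset_eq[of R "P i \<inter> R"] by auto
qed

lemma sum_cover_mult_eq_card_plus_doubly:
  assumes "finite S" "S \<subseteq> E"
  shows "(\<Sum>e\<in>S. cover_mult P e) = card S + card {e\<in>S. doubly_covered P e}"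
proof -
  have "(\<Sum>e\<in>S. cover_mult P e) = (\<Sum>e\<in>S. 1 + of_bool (doubly_covered P e))"
    using assms(2) cover_mult_1_or_2 unfolding doubly_covered_def
    by (intro sum.cong) fastforce+
  also have "\<dots> = card S + card {e\<in>S. doubly_covered P e}"
    unfolding sum.distrib using assms(1) by (simp add: Int_def conj_commute)
  finally show ?thesis .
qed

lemma two_edge_cut_covered_alike:
  assumes "is_k_edge_cut V E ends 2 R"
  shows "((\<forall>e\<in>R. simply_covered P e) \<or> (\<forall>e\<in>R. doubly_covered P e)) \<and>
    (\<forall>e\<in>R. \<forall>f\<in>R. {i. i < 4 \<and> e \<in> P i} = {i. i < 4 \<and> f \<in> P i})"
proof -
  have same: "\<forall>e\<in>R. \<forall>f\<in>R. {i. i < 4 \<and> e \<in> P i} = {i. i < 4 \<and> f \<in> P i}"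
    using matching_meets_two_edge_cut[OF assms] by blast
  obtain e0 where "e0 \<in> R"
    using assms unfolding is_k_edge_cut_def by fastforce
  have mult_eq: "cover_mult P e = cover_mult P e0" if "e \<in> R" for e
    unfolding cover_mult_def using same[rule_format, OF that \<open>e0 \<in> R\<close>] by simp
  have "cover_mult P e0 = 1 \<or> cover_mult P e0 = 2"
    using \<open>e0 \<in> R\<close> edge_cut_subset[OF assms] cover_mult_1_or_2 by blast
  then have "(\<forall>e\<in>R. simply_covered P e) \<or> (\<forall>e\<in>R. doubly_covered P e)"
    using mult_eq unfolding simply_covered_def doubly_covered_def by auto
  with same show ?thesis
    by blast
qed

(* The multiplicities on R add up to 3 + #(doubly covered edges), and also to a sum of
   four odd numbers |P_i \<inter> R|. *)
lemma three_edge_cut_doubly_covered: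
  assumes "is_k_edge_cut V E ends 3 R"
  shows "(card {e\<in>R. doubly_covered P e} = 1 \<or> (\<forall>e\<in>R. doubly_covered P e)) \<and>
    ((\<forall>e\<in>R. doubly_covered P e) \<longrightarrow> (\<exists>j<4. R \<subseteq> P j))"
proof -
  define D where "D = {e\<in>R. doubly_covered P e}"
  have "card R = 3" "finite R"
    using assms unfolding is_k_edge_cut_def by (auto intro: card_ge_0_finite)
  have sum_D: "(\<Sum>i<4. card (P i \<inter> R)) = 3 + card D"
    using sum_card_inter_eq_sum_cover_mult[OF \<open>finite R\<close>]
      sum_cover_mult_eq_card_plus_doubly[OF \<open>finite R\<close> edge_cut_subset[OF assms]]
    unfolding D_def \<open>card R = 3\<close> by simp
  have "{i\<in>{..<4}. odd (card (P i \<inter> R))} = {..<4}"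
    using matching_meets_edge_cut[OF assms] by auto
  then have "even (\<Sum>i<4. card (P i \<inter> R))"
    by (simp add: even_sum_iff)
  moreover have "card D \<le> 3"
    using card_mono[OF \<open>finite R\<close>, of D] \<open>card R = 3\<close> unfolding D_def by auto
  ultimately have "card D = 1 \<or> card D = card R"
    using sum_D \<open>card R = 3\<close> by presburger
  then have one_or_all: "card D = 1 \<or> (\<forall>e\<in>R. doubly_covered P e)"
    using card_subset_eq[OF \<open>finite R\<close>, of D] unfolding D_def by auto
  have "\<exists>j<4. R \<subseteq> P j" if "\<forall>e\<in>R. doubly_covered P e"
  proof (rule ccontr)
    assume "\<not> (\<exists>j<4. R \<subseteq> P j)"
    then have "(\<Sum>i<4. card (P i \<inter> R)) = (\<Sum>i<4::nat. 1)"
      using matching_meets_three_edge_cut[OF assms] by (intro sum.cong) auto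
    moreover have "D = R"
      using that unfolding D_def by blast
    ultimately show False
      using sum_D \<open>card R = 3\<close> by simp
  qed
  with one_or_all show ?thesis
    unfolding D_def by blast
qed

end

theorem lemma6p2:
  fixes V :: "'v set" and E :: "'e set" and ends :: "'e \<Rightarrow> 'v set"
    and P :: "nat \<Rightarrow> 'e set"
  assumes "cubic V E ends" and "two_connected V E ends" and "pm_4cover V E ends P"
  shows "(\<forall>R. is_k_edge_cut V E ends 2 R \<longrightarrow>
            ((\<forall>e\<in>R. simply_covered P e) \<or> (\<forall>e\<in>R. doubly_covered P e)) \<and>
            (\<forall>e\<in>R. \<forall>f\<in>R. {i. i < 4 \<and> e \<in> P i} = {i. i < 4 \<and> f \<in> P i}))
       \<and> (\<forall>R. is_k_edge_cut V E ends 3 R \<longrightarrow>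
            (card {e\<in>R. doubly_covered P e} = 1 \<or> (\<forall>e\<in>R. doubly_covered P e)) \<and>
            ((\<forall>e\<in>R. doubly_covered P e) \<longrightarrow> (\<exists>j<4. R \<subseteq> P j)))"
proof -
  interpret cubic_pm_4cover V E ends P
    using assms(1,3) by unfold_locales
  show ?thesis
    using two_edge_cut_covered_alike three_edge_cut_doubly_covered by blast
qed

end
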